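(* Let $\lambda$ be a partition and $a,b,c,d\in\mathbb F$. Then: (i) $\langle v_\lambda,\Xi_{aa}v_\lambda\rangle=\sum_{x\in C_\lambda}\mathrm{sgn}(x)\,\delta_{a,x}$; (ii) $\langle v_\lambda,\Xi_{abcd}v_\lambda\rangle\neq0$ only if ($a=b$ and $c=d$) or ($a=d$ and $b=c$); (iii) if $a\ne b$, then $\langle v_\lambda,\Xi_{abba}v_\lambda\rangle=-\sum_{x,x'\in C_\lambda}\mathrm{sgn}(x\,x')\,\delta_{a,x}\,\delta_{b,x'}$.
   Context: $\mathbb F=\mathbb Z+\frac12$. $\mathsf F$ has orthonormal basis $v_S$ for strictly decreasing sequences $S=(s_i)_{i\ge1}\subset\mathbb F$ with $s_{i+1}=s_i-1$ for large $i$ (think $v_S=\underline{s_1}\wedge\underline{s_2}\wedge\cdots$). For $k\in\mathbb F$: $\psi_kv_S=0$ if $k\in S$, else $\psi_kv_S=(-1)^{\#\{i:s_i>k\}}v_{S\cup\{k\}}$; $\psi^*_kv_S=(-1)^{i-1}v_{S\setminus\{s_i\}}$ if $k=s_i$, else $0$. For $a>0$, $\psi_a,\psi^*_{-a}$ are creation and $\psi_{-a},\psi^*_a$ annihilation operators; $:\phi_1\cdots\phi_k:=\mathrm{sgn}(\sigma)\phi_{\sigma(1)}\cdots\phi_{\sigma(k)}$ for any permutation $\sigma$ moving creation operators to the left of annihilation operators. $\Xi_{ab}=:\psi_a\psi^*_b:$, $\Xi_{abcd}=:\psi_a\psi^*_b\psi_c\psi^*_d:$. For a partition $\lambda$, $v_\lambda=v_{S_\lambda}$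 with $S_\lambda=(\lambda_j-j+\frac12)_{j\ge1}$. Modified Frobenius coordinates: if $d$ is the number of $i$ with $\lambda_i\ge i$, put $c_i=\lambda_i-i+\frac12$, $c_i^*=-(\lambda'_i-i)-\frac12$ ($i=1,\dots,d$, $\lambda'$ the transpose partition), and $C_\lambda=\{c_1,\dots,c_d,c^*_1,\dots,c^*_d\}$. *)

theory Defs
  imports Main "HOL.Real"
begin

definition HalfInt :: "real set" where
  "HalfInt = {real_of_int n + 1/2 | n. True}"

text \<open>A basis vector v_S is indexed by the set of entries of the strictly decreasing
  sequence S. A vector is a (finitely supported) coefficient function on index sets.\<close>

type_synonym vec = "real set \<Rightarrow> real"

definition basis :: "real set \<Rightarrow> vec" where
  "basis S = (\<lambda>T. if T = S then 1 else 0)"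

definition scaleV :: "real \<Rightarrow> vec \<Rightarrow> vec" where
  "scaleV c v = (\<lambda>T. c * v T)"

definition zeroV :: vec where
  "zeroV = (\<lambda>T. 0)"

definition lin_ext :: "(real set \<Rightarrow> vec) \<Rightarrow> vec \<Rightarrow> vec" where
  "lin_ext f v = (\<lambda>T. \<Sum>S\<in>{S. v S \<noteq> 0}. v S * f S T)"

definition innerF :: "vec \<Rightarrow> vec \<Rightarrow> real" where
  "innerF u v = (\<Sum>S\<in>{S. u S \<noteq> 0 \<and> v S \<noteq> 0}. u S * v S)"

definition nabove :: "real set \<Rightarrow> real \<Rightarrow> nat" where
  "nabove S k = card {s\<in>S. s > k}"

definition psi_basis :: "real \<Rightarrow> real set \<Rightarrow> vec" where
  "psi_basis k S = (if k \<in> S then zeroV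
                    else scaleV ((-1) ^ nabove S k) (basis (insert k S)))"

text \<open>If k = s_i then i - 1 = #{j : s_j > k}.\<close>
definition psistar_basis :: "real \<Rightarrow> real set \<Rightarrow> vec" where
  "psistar_basis k S = (if k \<in> S then scaleV ((-1) ^ nabove S k) (basis (S - {k}))
                        else zeroV)"

datatype fop = Psi real | PsiS real

fun act :: "fop \<Rightarrow> vec \<Rightarrow> vec" where
  "act (Psi k) v = lin_ext (psi_basis k) v"
| "act (PsiS k) v = lin_ext (psistar_basis k) v"

fun creation :: "fop \<Rightarrow> bool" where
  "creation (Psi k) = (k > 0)"
| "creation (PsiS k) = (k < 0)"

text \<open>Product phi_1 ... phi_k applied to v (phi_k acts first).\<close>
definition word_apply :: "fop list \<Rightarrow> vec \<Rightarrow> vec" where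
  "word_apply ops v = foldr act ops v"

text \<open>Number of inversions of the stable permutation moving creation operators to the
  left of annihilation operators; its parity is sgn(sigma).\<close>
definition n_inv :: "fop list \<Rightarrow> nat" where
  "n_inv ops = card {(i, j). i < j \<and> j < length ops \<and>
                  \<not> creation (ops ! i) \<and> creation (ops ! j)}"

definition normal_ord :: "fop list \<Rightarrow> vec \<Rightarrow> vec" where
  "normal_ord ops v = scaleV ((-1) ^ n_inv ops)
     (word_apply (filter creation ops @ filter (\<lambda>x. \<not> creation x) ops) v)"

definition Xi2 :: "real \<Rightarrow> real \<Rightarrow> vec \<Rightarrow> vec" where
  "Xi2 a b = normal_ord [Psi a, PsiS b]"

definition Xi4 :: "real \<Rightarrow> real \<Rightarrow> real \<Rightarrow> real \<Rightarrow> vec \<Rightarrow> vec" where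
  "Xi4 a b c d = normal_ord [Psi a, PsiS b, Psi c, PsiS d]"

definition is_partition :: "nat list \<Rightarrow> bool" where
  "is_partition lam \<longleftrightarrow> sorted_wrt (\<ge>) lam \<and> (\<forall>x\<in>set lam. 0 < x)"

definition part :: "nat list \<Rightarrow> nat \<Rightarrow> nat" where
  "part lam j = (if 1 \<le> j \<and> j \<le> length lam then lam ! (j - 1) else 0)"

definition conjp :: "nat list \<Rightarrow> nat \<Rightarrow> nat" where
  "conjp lam i = card {j. 1 \<le> j \<and> i \<le> part lam j}"

definition S_of :: "nat list \<Rightarrow> real set" where
  "S_of lam = {real (part lam j) - real j + 1/2 | j. 1 \<le> j}"

definition v_of :: "nat list \<Rightarrow> vec" where
  "v_of lam = basis (S_of lam)"

definition frob_d :: "nat list \<Rightarrow> nat" where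
  "frob_d lam = card {i. 1 \<le> i \<and> i \<le> part lam i}"

definition C_of :: "nat list \<Rightarrow> real set" where
  "C_of lam =
     {real (part lam i) - real i + 1/2 | i. 1 \<le> i \<and> i \<le> frob_d lam}
   \<union> {- (real (conjp lam i) - real i) - 1/2 | i. 1 \<le> i \<and> i \<le> frob_d lam}"

definition delta :: "real \<Rightarrow> real \<Rightarrow> real" where
  "delta x y = (if x = y then 1 else 0)"

end

theory Submission
  imports Defs "HOL-Library.Multiset"
begin

(* A word in the operators psi_k, psi*_k maps a basis vector v_S to a multiple of a single
   basis vector v_T, and T differs from S at k by the number of psi_k minus the number of
   psi*_k in the word.  So a diagonal matrix element can only be nonzero if every index is
   created as often as it is annihilated, which for Xi_abcd forces (ii).  The diagonal
   elements are computed directly: after normal ordering, Xi_aa detects an occupied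
   position a of S when a > 0 and a hole at a when a < 0, with sign sgn a, and for a <> b
   Xi_abba is the product of the detectors for a and b, with sign -sgn a sgn b.  It remains
   to recognise C_lambda: its positive part is the positive part of S_lambda, and its
   negative part is the set of negative half-integers missing from S_lambda, because the
   numbers lambda_j - j + 1/2 and i - lambda'_i - 1/2 (i, j >= 1) partition the
   half-integers. *)

lemma scaleV_zeroV [simp]: "scaleV c zeroV = zeroV"
  by (simp add: scaleV_def zeroV_def)

lemma scaleV_scaleV [simp]: "scaleV c (scaleV d v) = scaleV (c * d) v"
  by (simp add: scaleV_def mult.assoc)

lemma scaleV_0 [simp]: "scaleV 0 v = zeroV"
  by (simp add: scaleV_def zeroV_def)

lemma basis_eq_scaleV_1: "basis S = scaleV 1 (basis S)"
  by (simp add: scaleV_def)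

lemma lin_ext_scaleV_basis: "lin_ext f (scaleV c (basis S)) = scaleV c (f S)"
proof (cases "c = 0")
  case True
  then show ?thesis by (simp add: lin_ext_def scaleV_def zeroV_def)
next
  case False
  then have "{T. scaleV c (basis S) T \<noteq> 0} = {S}" by (auto simp: scaleV_def basis_def)
  with False show ?thesis by (simp add: lin_ext_def scaleV_def basis_def)
qed

lemma act_Psi_scaleV_basis [simp]:
  "act (Psi k) (scaleV c (basis S)) =
     (if k \<in> S then zeroV else scaleV (c * (-1) ^ nabove S k) (basis (insert k S)))"
  by (simp add: lin_ext_scaleV_basis psi_basis_def)

lemma act_PsiS_scaleV_basis [simp]:
  "act (PsiS k) (scaleV c (basis S)) =
     (if k \<in> S then scaleV (c * (-1) ^ nabove S k) (basis (S - {k})) else zeroV)"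
  by (simp add: lin_ext_scaleV_basis psistar_basis_def)

lemma act_zeroV [simp]: "act op zeroV = zeroV"
  by (cases op) (simp_all add: lin_ext_def zeroV_def)

lemma innerF_scaleV [simp]: "innerF u (scaleV c v) = c * innerF u v"
proof (cases "c = 0")
  case False
  then have "{S. u S \<noteq> 0 \<and> scaleV c v S \<noteq> 0} = {S. u S \<noteq> 0 \<and> v S \<noteq> 0}"
    by (auto simp: scaleV_def)
  then show ?thesis by (simp add: innerF_def scaleV_def sum_distrib_left algebra_simps)
qed (simp add: innerF_def scaleV_def)

lemma innerF_basis_basis [simp]: "innerF (basis S) (basis T) = (if T = S then 1 else 0)"
proof -
  have "{U. basis S U \<noteq> 0 \<and> basis T U \<noteq> 0} = (if T = S then {S} else {})"
    by (auto simp: basis_def)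
  then show ?thesis by (simp add: innerF_def basis_def)
qed

lemma innerF_zeroV [simp]: "innerF u zeroV = 0"
  by (simp add: innerF_def zeroV_def)

lemma nabove_insert [simp]: "k \<le> j \<Longrightarrow> nabove (insert k S) j = nabove S j"
  unfolding nabove_def by (rule arg_cong[where f = card]) auto

lemma nabove_Diff [simp]: "k \<le> j \<Longrightarrow> nabove (S - {k}) j = nabove S j"
  unfolding nabove_def by (rule arg_cong[where f = card]) auto

declare act.simps [simp del]

lemma word_apply_Nil [simp]: "word_apply [] v = v"
  and word_apply_Cons [simp]: "word_apply (op # ops) v = act op (word_apply ops v)"
  by (simp_all add: word_apply_def)

lemma n_inv_Nil [simp]: "n_inv [] = 0"
  by (simp add: n_inv_def)

lemma n_inv_Cons [simp]:
  "n_inv (x # xs) = (if creation x then 0 else length (filter creation xs)) + n_inv xs"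
proof -
  let ?P = "\<lambda>ys i j. i < j \<and> j < length ys \<and> \<not> creation (ys ! i) \<and> creation (ys ! j)"
  have split: "{(i, j). ?P (x # xs) i j} =
      Pair 0 ` Suc ` {j. j < length xs \<and> \<not> creation x \<and> creation (xs ! j)}
    \<union> map_prod Suc Suc ` {(i, j). ?P xs i j}"
  proof (intro set_eqI iffI)
    fix p assume "p \<in> {(i, j). ?P (x # xs) i j}"
    then obtain i j where p: "p = (i, j)" and P: "?P (x # xs) i j" by blast
    then obtain j' where j': "j = Suc j'" by (cases j) auto
    show "p \<in> Pair 0 ` Suc ` {j. j < length xs \<and> \<not> creation x \<and> creation (xs ! j)}
      \<union> map_prod Suc Suc ` {(i, j). ?P xs i j}"
    proof (cases i)
      case 0
      then show ?thesis using p P j' by auto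
    next
      case (Suc i')
      then have "p = map_prod Suc Suc (i', j')" using p j' by simp
      moreover have "?P xs i' j'" using P Suc j' by simp
      ultimately show ?thesis by blast
    qed
  qed auto
  have "card {j. j < length xs \<and> \<not> creation x \<and> creation (xs ! j)} =
      (if creation x then 0 else length (filter creation xs))"
    by (simp add: length_filter_conv_card)
  moreover have "finite {(i, j). ?P xs i j}"
    by (rule finite_subset[of _ "{..<length xs} \<times> {..<length xs}"]) auto
  ultimately show ?thesis
    unfolding n_inv_def split
    by (subst card_Un_disjoint) (auto simp: card_image inj_on_def map_prod_def)
qed

lemma normal_ord_basis:
  "normal_ord ops (basis S) = scaleV ((-1) ^ n_inv ops)
     (word_apply (filter creation ops @ filter (\<lambda>x. \<not> creation x) ops) (scaleV 1 (basis S)))"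
  by (metis basis_eq_scaleV_1 normal_ord_def)

definition charge :: "fop list \<Rightarrow> real \<Rightarrow> int" where
  "charge ops x = int (count (mset ops) (Psi x)) - int (count (mset ops) (PsiS x))"

lemma charge_Nil [simp]: "charge [] x = 0"
  and charge_Cons_Psi [simp]: "charge (Psi k # ops) x = of_bool (x = k) + charge ops x"
  and charge_Cons_PsiS [simp]: "charge (PsiS k # ops) x = charge ops x - of_bool (x = k)"
  by (auto simp: charge_def)

(* The zero vector is scaleV 0 (basis T) for every T, so T says nothing when c' = 0. *)
lemma word_apply_scaleV_basis:
  obtains c' T where "word_apply ops (scaleV c (basis S)) = scaleV c' (basis T)"
    and "c' \<noteq> 0 \<Longrightarrow>
      \<forall>x. (if x \<in> T then 1 else 0) = (if x \<in> S then 1 else 0) + charge ops x"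
proof (induction ops arbitrary: thesis)
  case Nil
  then show ?case by simp
next
  case (Cons op ops)
  obtain c' T where cT: "word_apply ops (scaleV c (basis S)) = scaleV c' (basis T)"
    and T: "c' \<noteq> 0 \<Longrightarrow>
      \<forall>x. (if x \<in> T then 1 else 0) = (if x \<in> S then 1 else 0) + charge ops x"
    using Cons.IH by blast
  show ?case
  proof (cases op)
    case (Psi k)
    show ?thesis
    proof (cases "k \<in> T")
      case True
      then show ?thesis using Cons.prems[of 0 T] cT Psi by simp
    next
      case False
      then have "(if x \<in> insert k T then 1 else 0) = (if x \<in> T then 1 else 0) + (of_bool (x = k) :: int)"
        for x :: real
        by auto
      then show ?thesis
        using Cons.prems[of "c' * (-1) ^ nabove T k" "insert k T"] cT T Psi False by simp
    qed
  next
    case (PsiS k)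
    show ?thesis
    proof (cases "k \<in> T")
      case True
      then have "(if x \<in> T - {k} then 1 else 0) = (if x \<in> T then 1 else 0) - (of_bool (x = k) :: int)"
        for x :: real
        by auto
      then show ?thesis
        using Cons.prems[of "c' * (-1) ^ nabove T k" "T - {k}"] cT T PsiS True by simp
    next
      case False
      then show ?thesis using Cons.prems[of 0 T] cT PsiS by simp
    qed
  qed
qed

lemma charge_eq_0_if_innerF_word_apply:
  assumes "innerF (basis S) (word_apply ops (scaleV c (basis S))) \<noteq> 0"
  shows "charge ops x = 0"
proof -
  obtain c' T where cT: "word_apply ops (scaleV c (basis S)) = scaleV c' (basis T)"
    and T: "c' \<noteq> 0 \<Longrightarrow>
      \<forall>x. (if x \<in> T then 1 else 0) = (if x \<in> S then 1 else 0) + charge ops x"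
    using word_apply_scaleV_basis[where ops = ops and c = c and S = S] by blast
  from assms have "T = S" "c' \<noteq> 0"
    unfolding cT by (auto split: if_splits)
  with T show ?thesis by simp
qed

lemma charge_eq_0_if_innerF_normal_ord:
  assumes "innerF (basis S) (normal_ord ops (basis S)) \<noteq> 0"
  shows "charge ops x = 0"
proof -
  let ?ops' = "filter creation ops @ filter (\<lambda>x. \<not> creation x) ops"
  have "mset ?ops' = mset ops"
    by (metis mset_append mset_filter multiset_partition)
  then have "charge ops x = charge ?ops' x"
    by (simp add: charge_def)
  also have "\<dots> = 0"
    using assms by (intro charge_eq_0_if_innerF_word_apply[of S _ 1]) (simp add: normal_ord_basis)
  finally show ?thesis .
qed

lemma pairing_if_innerF_Xi4_nonzero:
  assumes "innerF (basis S) (Xi4 a b c d (basis S)) \<noteq> 0"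
  shows "(a = b \<and> c = d) \<or> (a = d \<and> b = c)"
proof -
  have "charge [Psi a, PsiS b, Psi c, PsiS d] x = 0" for x
    using assms unfolding Xi4_def by (rule charge_eq_0_if_innerF_normal_ord)
  then have balanced: "(if x = a then 1 else 0) + (if x = c then 1 else 0) =
      (if x = b then 1 else 0) + (if x = d then 1 else (0::int))" for x
    by (simp add: algebra_simps of_bool_def)
  show ?thesis
    using balanced[of a] balanced[of b] balanced[of c] by (cases "a = b") (auto split: if_splits)
qed

lemma innerF_Xi2_diag:
  assumes "a \<noteq> 0"
  shows "innerF (basis S) (Xi2 a a (basis S)) = sgn a * of_bool (a \<in> S \<longleftrightarrow> 0 < a)"
  using assms unfolding Xi2_def normal_ord_basis
  by (cases "0 < a"; cases "a \<in> S") (auto simp: insert_absorb)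

lemma innerF_Xi4_exchange:
  assumes "a \<noteq> 0" "b \<noteq> 0" "a \<noteq> b"
  shows "innerF (basis S) (Xi4 a b b a (basis S)) =
    - (sgn a * sgn b) * of_bool (a \<in> S \<longleftrightarrow> 0 < a) * of_bool (b \<in> S \<longleftrightarrow> 0 < b)"
  using assms unfolding Xi4_def normal_ord_basis
  by (cases "0 < a"; cases "0 < b"; cases "a \<in> S"; cases "b \<in> S")
    (auto simp: insert_absorb insert_commute mult.assoc)

lemma part_eq_0: "length lam < j \<Longrightarrow> part lam j = 0"
  by (simp add: Defs.part_def)

lemma part_antimono:
  assumes "is_partition lam" "1 \<le> i" "i \<le> j"
  shows "part lam j \<le> part lam i"
proof (cases "j \<le> length lam \<and> i < j")
  case True
  have "sorted_wrt (\<ge>) lam" using assms(1) by (simp add: is_partition_def)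
  then have "lam ! (j - 1) \<le> lam ! (i - 1)"
    using True assms(2) by (auto simp: sorted_wrt_iff_nth_less)
  then show ?thesis using True assms(2) by (simp add: Defs.part_def)
next
  case False
  then show ?thesis using assms(3) by (auto simp: Defs.part_def)
qed

lemma le_card_iff_mem_if_down_closed:
  fixes D :: "nat set"
  assumes "finite D" "0 \<notin> D" "\<And>i j. i \<in> D \<Longrightarrow> 0 < j \<Longrightarrow> j \<le> i \<Longrightarrow> j \<in> D" "0 < i"
  shows "i \<le> card D \<longleftrightarrow> i \<in> D"
proof (cases "D = {}")
  case False
  then have "Max D \<in> D" using assms(1) by simp
  have "D = {1..Max D}"
  proof
    show "D \<subseteq> {1..Max D}" using assms(1,2) by (auto simp: Suc_le_eq) (metis gr0I)
    show "{1..Max D} \<subseteq> D" using assms(3) \<open>Max D \<in> D\<close> by auto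
  qed
  then obtain M where "D = {1..M}" by blast
  then show ?thesis using assms(4) by auto
qed (use assms(4) in simp)

lemma le_frob_d_iff:
  assumes "is_partition lam" "1 \<le> i"
  shows "i \<le> frob_d lam \<longleftrightarrow> i \<le> part lam i"
proof -
  let ?D = "{i. 1 \<le> i \<and> i \<le> part lam i}"
  have "?D \<subseteq> {1..length lam}"
    using part_eq_0[of lam] by (force simp: not_less[symmetric])
  then have "finite ?D" by (rule finite_subset) simp
  moreover have "j \<in> ?D" if "i \<in> ?D" "0 < j" "j \<le> i" for i j
    using that part_antimono[OF assms(1), of j i] by auto
  ultimately show ?thesis
    using assms(2) le_card_iff_mem_if_down_closed[of ?D i] by (simp add: frob_d_def)
qed

lemma le_conjp_iff:
  assumes "is_partition lam" "1 \<le> i" "1 \<le> j"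
  shows "j \<le> conjp lam i \<longleftrightarrow> i \<le> part lam j"
proof -
  let ?D = "{j. 1 \<le> j \<and> i \<le> part lam j}"
  have "?D \<subseteq> {1..length lam}"
    using part_eq_0[of lam] assms(2) by (force simp: not_less[symmetric])
  then have "finite ?D" by (rule finite_subset) simp
  moreover have "k \<in> ?D" if "j \<in> ?D" "0 < k" "k \<le> j" for j k
    using that part_antimono[OF assms(1), of k j] by auto
  ultimately show ?thesis
    using assms(3) le_card_iff_mem_if_down_closed[of ?D j] by (simp add: conjp_def)
qed

lemma part_coord_ne_conj_coord:
  assumes "is_partition lam" "1 \<le> i" "1 \<le> j"
  shows "int (part lam j) - int j \<noteq> int i - 1 - int (conjp lam i)"
  using le_conjp_iff[OF assms] by (cases "i \<le> part lam j") auto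

lemma ex_down_crossing:
  fixes f :: "nat \<Rightarrow> int"
  assumes "m \<le> f k" "f n < m" "k \<le> n"
  shows "\<exists>j. k \<le> j \<and> j < n \<and> m \<le> f j \<and> f (Suc j) < m"
  using assms(2,3)
proof (induction n)
  case 0
  then show ?case using assms(1) by simp
next
  case (Suc n)
  show ?case
  proof (cases "f n < m \<and> k \<le> n")
    case True
    then show ?thesis using Suc.IH by (auto intro: less_SucI)
  next
    case False
    then have "m \<le> f n \<and> k \<le> n" using Suc.prems assms(1) by (auto simp: le_Suc_eq)
    then show ?thesis using Suc.prems by auto
  qed
qed

(* The witness is i = m + 1 + j for the last j with lambda_j - j > m; then lambda'_i = j. *)
lemma conj_coord_if_not_part_coord:
  assumes lam: "is_partition lam" and "m < 0"
    and not_part: "\<And>j. 1 \<le> j \<Longrightarrow> int (part lam j) - int j \<noteq> m"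
  obtains i where "1 \<le> i" "i \<le> frob_d lam" "int i - 1 - int (conjp lam i) = m"
proof -
  let ?f = "\<lambda>j. int (part lam j) - int j"
  let ?n = "length lam + nat (- m) + 1"
  have "m \<le> ?f 1" "?f ?n < m" "1 \<le> ?n"
    using \<open>m < 0\<close> part_eq_0[of lam ?n] by auto
  then obtain j where j: "1 \<le> j" "m \<le> ?f j" "?f (Suc j) < m"
    using ex_down_crossing[of m ?f 1 ?n] by blast
  with not_part have "m < ?f j" by force
  define i where "i = nat (m + 1 + int j)"
  have i: "int i = m + 1 + int j" "1 \<le> i"
    using j(3) by (auto simp: i_def)
  have "i \<le> part lam j" "\<not> i \<le> part lam (Suc j)"
    using i(1) \<open>m < ?f j\<close> j(3) by auto
  then have conj: "conjp lam i = j"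
    using le_conjp_iff[OF lam i(2) j(1)] le_conjp_iff[OF lam i(2), of "Suc j"] by simp
  have "i \<le> j" using i(1) \<open>m < 0\<close> by simp
  then have "i \<le> frob_d lam"
    using le_conjp_iff[OF lam i(2) i(2)] le_frob_d_iff[OF lam i(2)] conj by simp
  then show ?thesis using that i conj by simp
qed

lemma HalfInt_nonzero: "x \<in> HalfInt \<Longrightarrow> x \<noteq> 0"
proof
  assume "x \<in> HalfInt" "x = 0"
  then obtain m where "real_of_int m + 1/2 = 0" by (auto simp: HalfInt_def)
  then have "real_of_int (2 * m + 1) = 0" by simp
  then show False by presburger
qed

lemma C_of_eq_image:
  "C_of lam = (\<lambda>i. real (part lam i) - real i + 1/2) ` {1..frob_d lam}
    \<union> (\<lambda>i. real i - real (conjp lam i) - 1/2) ` {1..frob_d lam}"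
  by (auto simp: C_of_def)

lemma finite_C_of: "finite (C_of lam)"
  by (simp add: C_of_eq_image)

lemma mem_C_of_if_pos:
  assumes lam: "is_partition lam" and "0 < x"
  shows "x \<in> C_of lam \<longleftrightarrow> x \<in> S_of lam"
proof
  assume "x \<in> C_of lam"
  then consider (part) i where "1 \<le> i" "x = real (part lam i) - real i + 1/2"
    | (conj) i where "1 \<le> i" "i \<le> frob_d lam" "x = real i - real (conjp lam i) - 1/2"
    by (auto simp: C_of_eq_image)
  then show "x \<in> S_of lam"
  proof cases
    case part
    then show ?thesis by (auto simp: S_of_def)
  next
    case conj
    then have "i \<le> conjp lam i"
      using le_frob_d_iff[OF lam] le_conjp_iff[OF lam] by blast
    then show ?thesis using conj \<open>0 < x\<close> by simp
  qed
next
  assume "x \<in> S_of lam"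
  then obtain j where j: "1 \<le> j" "x = real (part lam j) - real j + 1/2"
    by (auto simp: S_of_def)
  with \<open>0 < x\<close> have "j \<le> frob_d lam"
    using le_frob_d_iff[OF lam j(1)] by simp
  then show "x \<in> C_of lam" using j by (auto simp: C_of_eq_image)
qed

lemma mem_C_of_if_neg:
  assumes lam: "is_partition lam" and "x \<in> HalfInt" "x < 0"
  shows "x \<in> C_of lam \<longleftrightarrow> x \<notin> S_of lam"
proof -
  obtain m where x: "x = real_of_int m + 1/2" and "m < 0"
    using assms(2,3) by (auto simp: HalfInt_def)
  have part_coord: "x = real (part lam j) - real j + 1/2 \<longleftrightarrow> int (part lam j) - int j = m"
    for j using x by linarith
  have conj_coord: "x = real i - real (conjp lam i) - 1/2 \<longleftrightarrow> int i - 1 - int (conjp lam i) = m"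
    for i using x by linarith
  show ?thesis
  proof
    assume "x \<in> C_of lam"
    then consider (part) i where "1 \<le> i" "i \<le> frob_d lam" "x = real (part lam i) - real i + 1/2"
      | (conj) i where "1 \<le> i" "x = real i - real (conjp lam i) - 1/2"
      by (auto simp: C_of_eq_image)
    then show "x \<notin> S_of lam"
    proof cases
      case part
      then show ?thesis using le_frob_d_iff[OF lam] \<open>x < 0\<close> by simp
    next
      case conj
      then show ?thesis
        using part_coord_ne_conj_coord[OF lam conj(1)] part_coord conj_coord
        by (auto simp: S_of_def)
    qed
  next
    assume "x \<notin> S_of lam"
    then have "int (part lam j) - int j \<noteq> m" if "1 \<le> j" for j
      using that part_coord by (auto simp: S_of_def)
    then obtain i where "1 \<le> i" "i \<le> frob_d lam" "int i - 1 - int (conjp lam i) = m"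
      using conj_coord_if_not_part_coord[OF lam \<open>m < 0\<close>] by blast
    then show "x \<in> C_of lam" using conj_coord by (auto simp: C_of_eq_image)
  qed
qed

lemma mem_C_of_iff:
  assumes "is_partition lam" "x \<in> HalfInt"
  shows "x \<in> C_of lam \<longleftrightarrow> (x \<in> S_of lam \<longleftrightarrow> 0 < x)"
  using mem_C_of_if_pos[OF assms(1)] mem_C_of_if_neg[OF assms] HalfInt_nonzero[OF assms(2)]
  by (cases "0 < x") auto

lemma sum_sgn_delta:
  "finite A \<Longrightarrow> (\<Sum>x\<in>A. sgn x * delta a x) = (if a \<in> A then sgn a else 0)"
  by (simp add: delta_def if_distrib[of "(*) _"] sum.delta cong: if_cong)

lemma sum_sum_sgn_delta:
  assumes "finite A"
  shows "(\<Sum>x\<in>A. \<Sum>x'\<in>A. sgn (x * x') * delta a x * delta b x') =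
    (if a \<in> A \<and> b \<in> A then sgn a * sgn b else 0)"
proof -
  have "(\<Sum>x\<in>A. \<Sum>x'\<in>A. sgn (x * x') * delta a x * delta b x') =
      (\<Sum>x\<in>A. sgn x * delta a x) * (\<Sum>x'\<in>A. sgn x' * delta b x')"
    by (simp add: sum_product sgn_mult mult_ac)
  then show ?thesis using assms by (simp add: sum_sgn_delta)
qed

theorem proposition3:
  fixes lam :: "nat list" and a b c d :: real
  assumes "is_partition lam"
    and "a \<in> HalfInt" and "b \<in> HalfInt" and "c \<in> HalfInt" and "d \<in> HalfInt"
  shows "(innerF (v_of lam) (Xi2 a a (v_of lam)) = (\<Sum>x\<in>C_of lam. sgn x * delta a x)) \<and>
         (innerF (v_of lam) (Xi4 a b c d (v_of lam)) \<noteq> 0 \<longrightarrow>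
           (a = b \<and> c = d) \<or> (a = d \<and> b = c)) \<and>
         (a \<noteq> b \<longrightarrow> innerF (v_of lam) (Xi4 a b b a (v_of lam)) =
           - (\<Sum>x\<in>C_of lam. \<Sum>x'\<in>C_of lam. sgn (x * x') * delta a x * delta b x'))"
proof (intro conjI impI)
  have a: "a \<noteq> 0" "a \<in> C_of lam \<longleftrightarrow> (a \<in> S_of lam \<longleftrightarrow> 0 < a)"
    using HalfInt_nonzero mem_C_of_iff assms(1,2) by auto
  have b: "b \<noteq> 0" "b \<in> C_of lam \<longleftrightarrow> (b \<in> S_of lam \<longleftrightarrow> 0 < b)"
    using HalfInt_nonzero mem_C_of_iff assms(1,3) by auto
  show "innerF (v_of lam) (Xi2 a a (v_of lam)) = (\<Sum>x\<in>C_of lam. sgn x * delta a x)"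
    using a by (simp add: v_of_def innerF_Xi2_diag sum_sgn_delta finite_C_of)
  show "(a = b \<and> c = d) \<or> (a = d \<and> b = c)" if "innerF (v_of lam) (Xi4 a b c d (v_of lam)) \<noteq> 0"
    using that unfolding v_of_def by (rule pairing_if_innerF_Xi4_nonzero)
  show "innerF (v_of lam) (Xi4 a b b a (v_of lam)) =
      - (\<Sum>x\<in>C_of lam. \<Sum>x'\<in>C_of lam. sgn (x * x') * delta a x * delta b x')" if "a \<noteq> b"
    using a b that by (simp add: v_of_def innerF_Xi4_exchange sum_sum_sgn_delta finite_C_of)
qed

end
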